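(* Let $M\in\mathbb{N}$, $M\ge2$, and let $r$ be a strong solution of the BVP. Then there exists $\delta>0$ such that $z$ is monotone on $(0,\delta)$. If, in addition, $r>0$ on $(0,\delta)$, then one of the following holds identically on $(0,\delta)$: (a) $\dot z\ge0$, equivalently $0<M^2-M\sqrt{M^2-1}\le\frac{R\dot r}{r}\le M^2+M\sqrt{M^2-1}$; (b) $\dot z\le0$ and $\left(\frac{r}{R}\right)^{\cdot}>0$; (c) $\dot z\le0$ and $\left(\frac{r}{R}\right)^{\cdot}<0$.
   Context: Fix constants $\gamma>0$, $s_0\ge0$, $\kappa\ge-\gamma s_0$ and a convex function $\rho\in C^\infty(\mathbb{R})$ with $\rho(s)=0$ for $s\le0$, $\rho(s)=\gamma s+\kappa$ for $s\ge s_0$, and $\rho=\rho_1$ on $[0,s_0]$ where $\rho_1$ is smooth and convex with $\rho_1(0)=0$, $\rho_1(s_0)=\gamma s_0+\kappa$. For $M\in\mathbb{N}\setminus\{0\}$ and a function $r$ on $(0,1]$ let $d(R)=\frac{Mr(R)\dot r(R)}{R}$ and $Lr(R)=\frac{M^2r}{R}-\dot r-R\ddot r$. A strong solution of the BVP is a function $r\in C([0,1])\cap C^\infty((0,1])$ with $Lr=M\rho''(d)\dot d\,r$ on $(0,1)$, $r(0)=0$ and $r(1)=1$. Let $f(s)=s\rho'(s)-\rho(s)$ and $z(R)=\frac{\dot r(R)^2}{2}+\frac{M^2r(R)^2}{2R^2}+f(d(R))$ for $R\in(0,1]$. *)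

theory Defs
  imports "HOL-Analysis.Analysis"
begin

text \<open>C-infinity on an arbitrary real set S: there is a sequence of functions F n
  with F 0 = f on S and F (n+1) the derivative of F n relative to S (one-sided at
  boundary points of S, e.g. at R = 1 for S = (0,1]).\<close>
definition smooth_on :: "real set \<Rightarrow> (real \<Rightarrow> real) \<Rightarrow> bool" where
  "smooth_on S f \<longleftrightarrow> (\<exists>F :: nat \<Rightarrow> real \<Rightarrow> real.
     (\<forall>x\<in>S. F 0 x = f x) \<and>
     (\<forall>n. \<forall>x\<in>S. (F n has_real_derivative F (Suc n) x) (at x within S)))"

definition rho_admissible :: "real \<Rightarrow> real \<Rightarrow> real \<Rightarrow> (real \<Rightarrow> real) \<Rightarrow> bool" where
  "rho_admissible \<gamma> s0 \<kappa> \<rho> \<longleftrightarrow>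
     \<gamma> > 0 \<and> s0 \<ge> 0 \<and> \<kappa> \<ge> - \<gamma> * s0 \<and>
     smooth_on UNIV \<rho> \<and> convex_on UNIV \<rho> \<and>
     (\<forall>s\<le>0. \<rho> s = 0) \<and> (\<forall>s\<ge>s0. \<rho> s = \<gamma> * s + \<kappa>) \<and>
     (\<exists>\<rho>1. smooth_on {0..s0} \<rho>1 \<and> convex_on {0..s0} \<rho>1 \<and>
        \<rho>1 0 = 0 \<and> \<rho>1 s0 = \<gamma> * s0 + \<kappa> \<and> (\<forall>s\<in>{0..s0}. \<rho> s = \<rho>1 s))"

definition dfun :: "nat \<Rightarrow> (real \<Rightarrow> real) \<Rightarrow> real \<Rightarrow> real" where
  "dfun M r R = real M * r R * deriv r R / R"

definition Lop :: "nat \<Rightarrow> (real \<Rightarrow> real) \<Rightarrow> real \<Rightarrow> real" where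
  "Lop M r R = (real M)\<^sup>2 * r R / R - deriv r R - R * deriv (deriv r) R"

definition strong_solution :: "nat \<Rightarrow> (real \<Rightarrow> real) \<Rightarrow> (real \<Rightarrow> real) \<Rightarrow> bool" where
  "strong_solution M \<rho> r \<longleftrightarrow>
     continuous_on {0..1} r \<and> smooth_on {0<..1} r \<and>
     (\<forall>R\<in>{0<..<1}. Lop M r R
        = real M * deriv (deriv \<rho>) (dfun M r R) * deriv (dfun M r) R * r R) \<and>
     r 0 = 0 \<and> r 1 = 1"

definition ffun :: "(real \<Rightarrow> real) \<Rightarrow> real \<Rightarrow> real" where
  "ffun \<rho> s = s * deriv \<rho> s - \<rho> s"

definition zfun :: "nat \<Rightarrow> (real \<Rightarrow> real) \<Rightarrow> (real \<Rightarrow> real) \<Rightarrow> real \<Rightarrow> real" where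
  "zfun M \<rho> r R = (deriv r R)\<^sup>2 / 2 + (real M)\<^sup>2 * (r R)\<^sup>2 / (2 * R\<^sup>2)
                   + ffun \<rho> (dfun M r R)"

end

theory Submission
  imports Defs
begin

text \<open>Writing \<open>\<Phi> = R\<^sup>2 r'\<^sup>2 - 2 M\<^sup>2 R r r' + M\<^sup>2 r\<^sup>2\<close>, one has \<open>z' = -\<Phi> / R\<^sup>3\<close>.
  At a zero of \<open>\<Phi>\<close> either \<open>r = r' = 0\<close>, which uniqueness for the (linear in \<open>r\<close>)
  equation rules out because \<open>r(1) = 1\<close>, or the equation together with \<open>\<rho>'' \<ge> 0\<close> forces
  \<open>\<Phi>' < 0\<close>. So \<open>\<Phi>\<close> only crosses zero downwards: either \<open>\<Phi> > 0\<close> near \<open>0\<close>, where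
  \<open>z\<close> decreases and \<open>R r' - r\<close> cannot vanish (it would make \<open>\<Phi> = (1 - M\<^sup>2) r\<^sup>2\<close>), or
  \<open>\<Phi> \<le> 0\<close> on all of \<open>(0,1)\<close>, where \<open>z\<close> increases and \<open>R r'/r\<close> lies between the roots
  \<open>M\<^sup>2 \<plusminus> M \<surd>(M\<^sup>2 - 1)\<close> of \<open>w\<^sup>2 - 2 M\<^sup>2 w + M\<^sup>2\<close>.\<close>

text \<open>Past the last zero \<open>c\<close> of \<open>f\<close> in \<open>[a,b]\<close> the function is negative near \<open>c\<close>, so
  \<open>f b > 0\<close> would force a later zero.\<close>
lemma nonpos_if_DERIV_neg_at_zeros:
  fixes f f' :: "real \<Rightarrow> real"
  assumes "a \<le> b"
    and der: "\<And>x. x \<in> {a..b} \<Longrightarrow> (f has_real_derivative f' x) (at x)"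
    and neg: "\<And>x. x \<in> {a..b} \<Longrightarrow> f x = 0 \<Longrightarrow> f' x < 0"
    and "f a \<le> 0"
  shows "f b \<le> 0"
proof (rule ccontr)
  assume "\<not> f b \<le> 0"
  have cont: "continuous_on {a..b} f"
    using der DERIV_isCont by (intro continuous_at_imp_continuous_on) blast
  define Z where "Z = {x\<in>{a..b}. f x = 0}"
  have "closed Z"
    unfolding Z_def using cont by (rule continuous_closed_preimage_constant) simp
  moreover have "Z \<subseteq> {a..b}"
    unfolding Z_def by auto
  ultimately have "compact Z"
    using compact_Int_closed[OF compact_Icc, of Z a b] by (simp add: Int_absorb1)
  obtain x0 where "a \<le> x0" "x0 \<le> b" "f x0 = 0"
    using IVT'[of f a 0 b, OF \<open>f a \<le> 0\<close> _ \<open>a \<le> b\<close> cont] \<open>\<not> f b \<le> 0\<close> by auto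
  then have "Z \<noteq> {}"
    unfolding Z_def by auto
  then obtain c where c: "c \<in> Z" and c_max: "\<forall>t\<in>Z. t \<le> c"
    using compact_attains_sup[OF \<open>compact Z\<close>] by blast
  have c_ab: "c \<in> {a..b}" and "f c = 0"
    using c unfolding Z_def by auto
  then have "a \<le> c" "c < b"
    using \<open>\<not> f b \<le> 0\<close> by (auto simp: order.order_iff_strict)
  obtain d where "d > 0" and d: "\<And>h. 0 < h \<Longrightarrow> h < d \<Longrightarrow> f (c + h) < f c"
    using DERIV_neg_dec_right[OF der[OF c_ab] neg[OF c_ab \<open>f c = 0\<close>]] by blast
  define h where "h = min (d/2) (b - c)"
  have h: "0 < h" "h < d" "c + h \<le> b"
    using \<open>d > 0\<close> \<open>c < b\<close> unfolding h_def by auto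
  have "f (c + h) \<le> 0"
    using d[OF h(1,2)] \<open>f c = 0\<close> by simp
  moreover have "continuous_on {c + h..b} f"
    using \<open>a \<le> c\<close> h(1) by (intro continuous_on_subset[OF cont]) auto
  ultimately obtain x where "c + h \<le> x" "x \<le> b" "f x = 0"
    using IVT'[of f "c + h" 0 b] \<open>\<not> f b \<le> 0\<close> h by auto
  then have "x \<in> Z"
    using \<open>a \<le> c\<close> h unfolding Z_def by auto
  then show False
    using c_max \<open>c + h \<le> x\<close> h(1) by force
qed

lemma Gronwall_zero:
  fixes E E' :: "real \<Rightarrow> real"
  assumes "a \<le> b"
    and der: "\<And>x. x \<in> {a..b} \<Longrightarrow> (E has_real_derivative E' x) (at x)"
    and le: "\<And>x. x \<in> {a..b} \<Longrightarrow> E' x \<le> C * E x"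
    and "E a = 0" "E b \<ge> 0"
  shows "E b = 0"
proof -
  define g where "g x = exp (- C * x) * E x" for x
  have "g b \<le> g a"
  proof (rule deriv_nonpos_imp_antimono[OF _ _ \<open>a \<le> b\<close>])
    fix x assume x: "x \<in> {a..b}"
    show "(g has_real_derivative exp (- C * x) * (E' x - C * E x)) (at x)"
      unfolding g_def by (auto intro!: derivative_eq_intros der[OF x] simp: algebra_simps)
    show "exp (- C * x) * (E' x - C * E x) \<le> 0"
      using le[OF x] by (simp add: mult_nonneg_nonpos)
  qed
  then have "E b \<le> 0"
    using \<open>E a = 0\<close> by (simp add: g_def mult_le_0_iff)
  then show ?thesis
    using \<open>E b \<ge> 0\<close> by simp
qed

text \<open>The energy \<open>a\<^sup>2 + b\<^sup>2\<close> satisfies \<open>E' \<le> (1 + 3 K) E\<close> and vanishes at \<open>x0\<close>.\<close>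
lemma second_order_linear_bound_zero:
  fixes a b c :: "real \<Rightarrow> real"
  assumes "x0 \<le> y"
    and a_der: "\<And>t. t \<in> {x0..y} \<Longrightarrow> (a has_real_derivative b t) (at t)"
    and b_der: "\<And>t. t \<in> {x0..y} \<Longrightarrow> (b has_real_derivative c t) (at t)"
    and c_bound: "\<And>t. t \<in> {x0..y} \<Longrightarrow> \<bar>c t\<bar> \<le> K * (\<bar>a t\<bar> + \<bar>b t\<bar>)" and "K \<ge> 0"
    and "a x0 = 0" "b x0 = 0"
  shows "a y = 0"
proof -
  define E where "E t = (a t)\<^sup>2 + (b t)\<^sup>2" for t
  have "E y = 0"
  proof (rule Gronwall_zero[OF \<open>x0 \<le> y\<close>])
    fix t assume t: "t \<in> {x0..y}"
    show "(E has_real_derivative 2 * a t * b t + 2 * b t * c t) (at t)"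
      unfolding E_def by (auto intro!: derivative_eq_intros a_der[OF t] b_der[OF t])
    have ab: "2 * \<bar>a t\<bar> * \<bar>b t\<bar> \<le> E t"
      using sum_squares_bound[of "\<bar>a t\<bar>" "\<bar>b t\<bar>"] unfolding E_def by (simp add: power2_eq_square)
    have "2 * a t * b t + 2 * b t * c t \<le> 2 * \<bar>a t\<bar> * \<bar>b t\<bar> + 2 * \<bar>b t\<bar> * \<bar>c t\<bar>"
      using abs_ge_self[of "a t * b t"] abs_ge_self[of "b t * c t"] by (simp add: abs_mult)
    also have "\<dots> \<le> E t + 2 * \<bar>b t\<bar> * (K * (\<bar>a t\<bar> + \<bar>b t\<bar>))"
      using ab mult_left_mono[OF c_bound[OF t], of "2 * \<bar>b t\<bar>"] by simp
    also have "\<dots> = E t + K * (2 * \<bar>a t\<bar> * \<bar>b t\<bar>) + 2 * K * (b t)\<^sup>2"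
      by (simp add: algebra_simps power2_eq_square)
    also have "\<dots> \<le> E t + K * E t + 2 * K * E t"
    proof -
      have "2 * K * (b t)\<^sup>2 \<le> 2 * K * E t"
        using \<open>K \<ge> 0\<close> by (simp add: E_def mult_left_mono)
      then show ?thesis
        using mult_left_mono[OF ab \<open>K \<ge> 0\<close>] by linarith
    qed
    also have "\<dots> = (1 + 3 * K) * E t"
      by (simp add: algebra_simps)
    finally show "2 * a t * b t + 2 * b t * c t \<le> (1 + 3 * K) * E t" .
  qed (simp_all add: E_def \<open>a x0 = 0\<close> \<open>b x0 = 0\<close>)
  then show ?thesis
    by (simp add: E_def add_nonneg_eq_0_iff)
qed

lemma convex_on_second_derivative_nonneg:
  fixes f f' f'' :: "real \<Rightarrow> real"
  assumes convex: "convex_on UNIV f"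
    and der: "\<And>x. (f has_real_derivative f' x) (at x)"
    and der': "\<And>x. (f' has_real_derivative f'' x) (at x)"
  shows "f'' x \<ge> 0"
proof (rule ccontr)
  assume "\<not> f'' x \<ge> 0"
  then obtain d where "d > 0" and d: "\<And>h. 0 < h \<Longrightarrow> h < d \<Longrightarrow> f' (x + h) < f' x"
    using DERIV_neg_dec_right[OF der'] by (metis not_le)
  define y where "y = x + d / 2"
  have "x < y" "f' y < f' x"
    using \<open>d > 0\<close> d[of "d / 2"] unfolding y_def by auto
  moreover have "f y - f x \<ge> f' x * (y - x)" "f x - f y \<ge> f' y * (x - y)"
    by (rule convex_on_imp_above_tangent[OF convex]; simp add: der)+
  ultimately have "(f' x - f' y) * (y - x) \<le> 0"
    by (simp add: algebra_simps)
  then show False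
    using \<open>x < y\<close> \<open>f' y < f' x\<close> by (simp add: mult_le_0_iff)
qed

lemma smooth_on_deriv_iterate:
  assumes "smooth_on S f" "open T" "T \<subseteq> S" "x \<in> T"
  shows "((deriv ^^ n) f has_real_derivative (deriv ^^ Suc n) f x) (at x)"
proof -
  obtain F where F0: "\<forall>x\<in>S. F 0 x = f x"
    and F: "\<forall>n. \<forall>x\<in>S. (F n has_real_derivative F (Suc n) x) (at x within S)"
    using assms(1) unfolding smooth_on_def by blast
  have F_at: "(F n has_real_derivative F (Suc n) y) (at y)" if "y \<in> T" for n y
  proof -
    have "(F n has_real_derivative F (Suc n) y) (at y within S)"
      using F that assms(3) by blast
    then show ?thesis
      by (simp add: at_within_open_subset[OF that assms(2,3)])
  qed
  have iterate: "\<forall>y\<in>T. (deriv ^^ n) f y = F n y" for n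
  proof (induction n)
    case 0
    then show ?case using F0 assms(3) by auto
  next
    case (Suc n)
    show ?case
    proof
      fix y assume "y \<in> T"
      have "((deriv ^^ n) f has_real_derivative F (Suc n) y) (at y)"
        using has_field_derivative_transform_within_open[OF F_at[OF \<open>y \<in> T\<close>] assms(2) \<open>y \<in> T\<close>] Suc
        by simp
      then show "(deriv ^^ Suc n) f y = F (Suc n) y"
        by (simp add: DERIV_imp_deriv)
    qed
  qed
  show ?thesis
    using has_field_derivative_transform_within_open[OF F_at[OF assms(4)] assms(2,4)] iterate[of n]
      iterate[of "Suc n"] assms(4) by simp
qed

lemma connected_nonzero_sign:
  fixes f :: "real \<Rightarrow> real"
  assumes "connected S" "continuous_on S f" "\<And>x. x \<in> S \<Longrightarrow> f x \<noteq> 0"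
  shows "(\<forall>x\<in>S. f x > 0) \<or> (\<forall>x\<in>S. f x < 0)"
proof (rule ccontr)
  assume "\<not> ?thesis"
  then obtain x y where "x \<in> S" "y \<in> S" "\<not> f x > 0" "\<not> f y < 0"
    by blast
  moreover from this have "f x < 0" "f y > 0"
    using assms(3) by (auto simp: not_less order.order_iff_strict)
  moreover have "connected (f ` S)"
    by (rule connected_continuous_image[OF assms(2,1)])
  ultimately have "0 \<in> f ` S"
    using connectedD_interval[of "f ` S" "f x" "f y" 0] by force
  then show False
    using assms(3) by auto
qed

lemma mono_on_if_DERIV_nonneg:
  fixes f f' :: "real \<Rightarrow> real"
  assumes "connected S"
    and "\<And>x. x \<in> S \<Longrightarrow> (f has_real_derivative f' x) (at x)" "\<And>x. x \<in> S \<Longrightarrow> f' x \<ge> 0"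
  shows "mono_on S f"
proof (rule monotone_onI)
  fix x y assume "x \<in> S" "y \<in> S" "x \<le> y"
  then have "{x..y} \<subseteq> S"
    using connected_contains_Icc[OF assms(1)] by blast
  then show "f x \<le> f y"
    by (intro deriv_nonneg_imp_mono[of x y f f']) (use assms(2,3) \<open>x \<le> y\<close> in auto)
qed

lemma antimono_on_if_DERIV_nonpos:
  fixes f f' :: "real \<Rightarrow> real"
  assumes "connected S"
    and "\<And>x. x \<in> S \<Longrightarrow> (f has_real_derivative f' x) (at x)" "\<And>x. x \<in> S \<Longrightarrow> f' x \<le> 0"
  shows "monotone_on S (\<le>) (\<ge>) f"
proof (rule monotone_onI)
  fix x y assume "x \<in> S" "y \<in> S" "x \<le> y"
  then have "{x..y} \<subseteq> S"
    using connected_contains_Icc[OF assms(1)] by blast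
  then show "f y \<le> f x"
    by (intro deriv_nonpos_imp_antimono[of x y f f']) (use assms(2,3) \<open>x \<le> y\<close> in auto)
qed

lemma between_roots_if_quadratic_nonpos:
  fixes m w :: real
  assumes "m \<ge> 1" "w\<^sup>2 - 2 * m\<^sup>2 * w + m\<^sup>2 \<le> 0"
  shows "m\<^sup>2 - m * sqrt (m\<^sup>2 - 1) \<le> w" "w \<le> m\<^sup>2 + m * sqrt (m\<^sup>2 - 1)"
proof -
  have "(m * sqrt (m\<^sup>2 - 1))\<^sup>2 = m\<^sup>2 * (m\<^sup>2 - 1)"
    using assms(1) by (simp add: power_mult_distrib)
  then have "\<bar>w - m\<^sup>2\<bar>\<^sup>2 \<le> (m * sqrt (m\<^sup>2 - 1))\<^sup>2"
    using assms(2) by (simp add: power2_eq_square algebra_simps)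
  then have "\<bar>w - m\<^sup>2\<bar> \<le> m * sqrt (m\<^sup>2 - 1)"
    by (rule power2_le_imp_le) (use assms(1) in simp)
  then show "m\<^sup>2 - m * sqrt (m\<^sup>2 - 1) \<le> w" "w \<le> m\<^sup>2 + m * sqrt (m\<^sup>2 - 1)"
    by (simp_all add: abs_le_iff)
qed

lemma smaller_root_pos:
  fixes m :: real
  assumes "m > 0"
  shows "0 < m\<^sup>2 - m * sqrt (m\<^sup>2 - 1)"
proof -
  have "sqrt (m\<^sup>2 - 1) < m"
    using real_sqrt_less_mono[of "m\<^sup>2 - 1" "m\<^sup>2"] assms by simp
  then have "m * sqrt (m\<^sup>2 - 1) < m * m"
    using assms by (intro mult_strict_left_mono)
  then show ?thesis
    by (simp add: power2_eq_square)
qed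

text \<open>Here \<open>a, b, c, p\<close> stand for \<open>r, r', r'', \<rho>''(d)\<close>. With \<open>w = R b / a\<close> the root
  condition reads \<open>w\<^sup>2 - 2 m\<^sup>2 w + m\<^sup>2 = 0\<close>, so \<open>w > 0\<close>; eliminating \<open>c\<close> with the equation turns the left-hand side, times \<open>R\<^sup>2 (1 + k)\<close>, into
  \<open>a\<^sup>2 (m\<^sup>2 + k w) 2 w (1 - m\<^sup>2)\<close>, where \<open>k = m\<^sup>2 p a\<^sup>2 / R\<^sup>2 \<ge> 0\<close>.\<close>
lemma derivative_sign_at_root:
  fixes a b c R p m :: real
  assumes "R > 0" "a \<noteq> 0" "p \<ge> 0" "m > 1"
    and ode: "m\<^sup>2 * a / R - b - R * c = m * p * (m * (b\<^sup>2 + a * c) / R - m * a * b / R\<^sup>2) * a"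
    and root: "R\<^sup>2 * b\<^sup>2 - 2 * m\<^sup>2 * R * a * b + m\<^sup>2 * a\<^sup>2 = 0"
  shows "b\<^sup>2 * (1 - m\<^sup>2) + c * (R * b - m\<^sup>2 * a) < 0"
proof -
  define w where "w = R * b / a"
  define k where "k = m\<^sup>2 * p * a\<^sup>2 / R\<^sup>2"
  have b: "b = w * a / R"
    using assms(1,2) unfolding w_def by simp
  have "k \<ge> 0"
    unfolding k_def using \<open>p \<ge> 0\<close> by simp
  have "a\<^sup>2 * (w\<^sup>2 - 2 * m\<^sup>2 * w + m\<^sup>2) = 0"
    using root \<open>R > 0\<close> unfolding b by (simp add: field_simps power2_eq_square)
  then have w_root: "w\<^sup>2 - 2 * m\<^sup>2 * w + m\<^sup>2 = 0"
    using \<open>a \<noteq> 0\<close> by simp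
  have "w > 0"
  proof (rule ccontr)
    assume "\<not> w > 0"
    then have "2 * m\<^sup>2 * w \<le> 0"
      by (simp add: mult_nonneg_nonpos)
    then show False
      using w_root \<open>m > 1\<close> by (smt (verit) zero_le_power2 zero_less_power2)
  qed
  have "c * (R\<^sup>2 * (1 + k)) - a * (m\<^sup>2 - w - k * (w\<^sup>2 - w))
      = - R * ((m\<^sup>2 * a / R - b - R * c) - m * p * (m * (b\<^sup>2 + a * c) / R - m * a * b / R\<^sup>2) * a)"
    using \<open>R > 0\<close> unfolding b k_def by (simp add: field_simps power2_eq_square)
  then have c: "c * (R\<^sup>2 * (1 + k)) = a * (m\<^sup>2 - w - k * (w\<^sup>2 - w))"
    using ode by simp
  have "(b\<^sup>2 * (1 - m\<^sup>2) + c * (R * b - m\<^sup>2 * a)) * (R\<^sup>2 * (1 + k))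
      = w\<^sup>2 * a\<^sup>2 * (1 - m\<^sup>2) * (1 + k) + (c * (R\<^sup>2 * (1 + k))) * (a * (w - m\<^sup>2))"
    using \<open>R > 0\<close> unfolding b by (simp add: field_simps power2_eq_square)
  also have "\<dots> = a\<^sup>2 * ((m\<^sup>2 + k * w) * (2 * w * (1 - m\<^sup>2) - (w\<^sup>2 - 2 * m\<^sup>2 * w + m\<^sup>2)))"
    unfolding c by (simp add: algebra_simps power2_eq_square)
  also have "\<dots> = a\<^sup>2 * (m\<^sup>2 + k * w) * (2 * w * (1 - m\<^sup>2))"
    using w_root by simp
  also have "\<dots> < 0"
  proof (rule mult_pos_neg)
    show "0 < a\<^sup>2 * (m\<^sup>2 + k * w)"
      using \<open>a \<noteq> 0\<close> \<open>k \<ge> 0\<close> \<open>w > 0\<close> \<open>m > 1\<close> by (simp add: add_pos_nonneg)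
    have "1 < m\<^sup>2"
      using \<open>m > 1\<close> by (simp add: one_less_power)
    then show "2 * w * (1 - m\<^sup>2) < 0"
      using \<open>w > 0\<close> by (simp add: mult_pos_neg)
  qed
  finally show ?thesis
    using \<open>R > 0\<close> \<open>k \<ge> 0\<close> by (simp add: mult_less_0_iff)
qed

definition zform :: "nat \<Rightarrow> (real \<Rightarrow> real) \<Rightarrow> real \<Rightarrow> real" where
  "zform M r R = R\<^sup>2 * (deriv r R)\<^sup>2 - 2 * (real M)\<^sup>2 * R * r R * deriv r R + (real M)\<^sup>2 * (r R)\<^sup>2"

locale bvp_solution =
  fixes M :: nat and \<rho> r :: "real \<Rightarrow> real"
  assumes smooth_rho: "smooth_on UNIV \<rho>"
    and convex_rho: "convex_on UNIV \<rho>"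
    and solution: "strong_solution M \<rho> r"
begin

lemma rho_DERIV: "(\<rho> has_real_derivative deriv \<rho> s) (at s)"
  using smooth_on_deriv_iterate[OF smooth_rho open_UNIV subset_UNIV UNIV_I, of 0] by simp

lemma rho'_DERIV: "(deriv \<rho> has_real_derivative deriv (deriv \<rho>) s) (at s)"
  using smooth_on_deriv_iterate[OF smooth_rho open_UNIV subset_UNIV UNIV_I, of "Suc 0"] by simp

lemma isCont_rho'': "isCont (deriv (deriv \<rho>)) s"
  using DERIV_isCont[OF smooth_on_deriv_iterate[OF smooth_rho open_UNIV subset_UNIV UNIV_I,
        of "Suc (Suc 0)"]] by simp

lemma rho''_nonneg: "deriv (deriv \<rho>) s \<ge> 0"
  by (rule convex_on_second_derivative_nonneg[OF convex_rho rho_DERIV rho'_DERIV])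

lemma smooth_r: "smooth_on {0<..1} r"
  using solution unfolding strong_solution_def by blast

lemma r_deriv_iterate:
  "R \<in> {0<..<1} \<Longrightarrow> ((deriv ^^ n) r has_real_derivative (deriv ^^ Suc n) r R) (at R)"
  by (rule smooth_on_deriv_iterate[OF smooth_r open_greaterThanLessThan]) auto

lemma r_DERIV: "R \<in> {0<..<1} \<Longrightarrow> (r has_real_derivative deriv r R) (at R)"
  using r_deriv_iterate[of R 0] by simp

lemma r'_DERIV: "R \<in> {0<..<1} \<Longrightarrow> (deriv r has_real_derivative deriv (deriv r) R) (at R)"
  using r_deriv_iterate[of R "Suc 0"] by simp

lemma isCont_r'': "R \<in> {0<..<1} \<Longrightarrow> isCont (deriv (deriv r)) R"
  using DERIV_isCont[OF r_deriv_iterate[of R "Suc (Suc 0)"]] by simp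

lemma dfun_DERIV:
  assumes "R \<in> {0<..<1}"
  shows "(dfun M r has_real_derivative
    real M * ((deriv r R)\<^sup>2 + r R * deriv (deriv r) R) / R - real M * r R * deriv r R / R\<^sup>2) (at R)"
  unfolding dfun_def[abs_def] using assms
  by (auto intro!: derivative_eq_intros r_DERIV r'_DERIV simp: field_simps power2_eq_square)

lemma deriv_dfun:
  "R \<in> {0<..<1} \<Longrightarrow> deriv (dfun M r) R
    = real M * ((deriv r R)\<^sup>2 + r R * deriv (deriv r) R) / R - real M * r R * deriv r R / R\<^sup>2"
  by (rule DERIV_imp_deriv[OF dfun_DERIV])

lemma isCont_deriv_dfun:
  assumes "R \<in> {0<..<1}"
  shows "isCont (deriv (dfun M r)) R"
proof -
  have "eventually (\<lambda>t. t \<in> {0<..<1}) (nhds R)"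
    using assms by (intro eventually_nhds_in_open) auto
  then have "eventually (\<lambda>t. deriv (dfun M r) t = real M * ((deriv r t)\<^sup>2 + r t * deriv (deriv r) t) / t
      - real M * r t * deriv r t / t\<^sup>2) (nhds R)"
    by (rule eventually_mono) (rule deriv_dfun)
  moreover have "isCont (\<lambda>t. real M * ((deriv r t)\<^sup>2 + r t * deriv (deriv r) t) / t
      - real M * r t * deriv r t / t\<^sup>2) R"
    using assms DERIV_isCont[OF r_DERIV] DERIV_isCont[OF r'_DERIV] isCont_r''
    by (auto intro!: continuous_intros)
  ultimately show ?thesis
    by (simp add: isCont_cong)
qed

lemma ode:
  "R \<in> {0<..<1} \<Longrightarrow> (real M)\<^sup>2 * r R / R - deriv r R - R * deriv (deriv r) R
    = real M * deriv (deriv \<rho>) (dfun M r R) * deriv (dfun M r) R * r R"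
  using solution unfolding strong_solution_def Lop_def by blast

text \<open>Solved for \<open>r''\<close>, the equation is linear in \<open>(r, r')\<close> once \<open>ode_coeff\<close> is regarded
  as a given continuous coefficient; this is what yields uniqueness.\<close>
definition ode_coeff :: "real \<Rightarrow> real" where
  "ode_coeff R = ((real M)\<^sup>2 - R * real M * deriv (deriv \<rho>) (dfun M r R) * deriv (dfun M r) R) / R\<^sup>2"

lemma r''_eq: "R \<in> {0<..<1} \<Longrightarrow> deriv (deriv r) R = ode_coeff R * r R - deriv r R / R"
  using ode[of R] by (auto simp: ode_coeff_def field_simps power2_eq_square)

lemma isCont_ode_coeff: "R \<in> {0<..<1} \<Longrightarrow> isCont ode_coeff R"
  unfolding ode_coeff_def
  by (auto intro!: continuous_intros isCont_deriv_dfun continuous_at_compose[OF _ isCont_rho'', unfolded o_def]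
      DERIV_isCont[OF dfun_DERIV])

lemma no_double_zero:
  assumes x0: "x0 \<in> {0<..<1}" and "r x0 = 0" "deriv r x0 = 0"
  shows False
proof -
  have "r y = 0" if y: "y \<in> {x0<..<1}" for y
  proof -
    have sub: "{x0..y} \<subseteq> {0<..<1}"
      using x0 y by auto
    have "continuous_on {x0..y} ode_coeff"
      using sub isCont_ode_coeff by (intro continuous_at_imp_continuous_on) auto
    then obtain K where K: "\<And>t. t \<in> {x0..y} \<Longrightarrow> \<bar>ode_coeff t\<bar> \<le> K"
      using compact_imp_bounded[OF compact_continuous_image[OF _ compact_Icc]]
      by (force simp: bounded_iff)
    have "K \<ge> 0"
      using K[of x0] y by force
    show ?thesis
    proof (rule second_order_linear_bound_zero[of x0 y r "deriv r" "deriv (deriv r)" "K + 1 / x0"])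
      fix t assume t: "t \<in> {x0..y}"
      then have "t \<in> {0<..<1}" "x0 \<le> t"
        using sub by auto
      show "(r has_real_derivative deriv r t) (at t)" "(deriv r has_real_derivative deriv (deriv r) t) (at t)"
        using r_DERIV r'_DERIV \<open>t \<in> {0<..<1}\<close> by auto
      have "\<bar>deriv (deriv r) t\<bar> \<le> \<bar>ode_coeff t\<bar> * \<bar>r t\<bar> + \<bar>deriv r t\<bar> / t"
        using r''_eq[OF \<open>t \<in> {0<..<1}\<close>] \<open>t \<in> {0<..<1}\<close>
          abs_triangle_ineq4[of "ode_coeff t * r t" "deriv r t / t"]
        by (simp add: abs_mult abs_divide)
      also have "\<dots> \<le> K * \<bar>r t\<bar> + \<bar>deriv r t\<bar> / x0"
        using K[OF t] x0 \<open>x0 \<le> t\<close>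
        by (intro add_mono mult_right_mono divide_left_mono) auto
      also have "\<dots> \<le> (K + 1 / x0) * (\<bar>r t\<bar> + \<bar>deriv r t\<bar>)"
        using \<open>K \<ge> 0\<close> x0 by (simp add: algebra_simps)
      finally show "\<bar>deriv (deriv r) t\<bar> \<le> (K + 1 / x0) * (\<bar>r t\<bar> + \<bar>deriv r t\<bar>)" .
    qed (use y x0 \<open>K \<ge> 0\<close> assms(2,3) in auto)
  qed
  have "continuous_on {x0..1} r"
    using solution x0 unfolding strong_solution_def by (auto intro: continuous_on_subset)
  then have "closed {t \<in> {x0..1}. r t = 0}"
    by (rule continuous_closed_preimage_constant) simp
  moreover have "{x0<..<1} \<subseteq> {t \<in> {x0..1}. r t = 0}"
    using \<open>\<And>y. y \<in> {x0<..<1} \<Longrightarrow> r y = 0\<close> by auto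
  ultimately have "closure {x0<..<1} \<subseteq> {t \<in> {x0..1}. r t = 0}"
    by (rule closure_minimal[rotated])
  then have "r 1 = 0"
    using x0 by (auto dest!: subsetD[of _ _ 1])
  then show False
    using solution unfolding strong_solution_def by simp
qed

lemma zfun_DERIV:
  assumes R: "R \<in> {0<..<1}"
  shows "(zfun M \<rho> r has_real_derivative - zform M r R / R ^ 3) (at R)"
proof -
  let ?d = "dfun M r R" and ?d' = "deriv (dfun M r) R"
  have z: "zfun M \<rho> r = (\<lambda>t. (deriv r t)\<^sup>2 / 2 + (real M)\<^sup>2 * (r t)\<^sup>2 / (2 * t\<^sup>2)
      + (dfun M r t * deriv \<rho> (dfun M r t) - \<rho> (dfun M r t)))"
    by (simp add: fun_eq_iff zfun_def ffun_def)
  have "(dfun M r has_real_derivative ?d') (at R)"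
    using DERIV_imp_deriv[OF dfun_DERIV[OF R]] dfun_DERIV[OF R] by simp
  then have "(zfun M \<rho> r has_real_derivative deriv r R * deriv (deriv r) R
      + (real M)\<^sup>2 * (r R * deriv r R / R\<^sup>2 - (r R)\<^sup>2 / R ^ 3) + ?d * deriv (deriv \<rho>) ?d * ?d') (at R)"
    unfolding z using R
    by (auto intro!: derivative_eq_intros r_DERIV r'_DERIV DERIV_chain2[OF rho_DERIV]
        DERIV_chain2[OF rho'_DERIV] simp: field_simps power2_eq_square power3_eq_cube)
  moreover have "?d * deriv (deriv \<rho>) ?d * ?d'
      = deriv r R / R * ((real M)\<^sup>2 * r R / R - deriv r R - R * deriv (deriv r) R)"
    unfolding ode[OF R] by (simp add: dfun_def)
  moreover have "deriv r R * deriv (deriv r) R + (real M)\<^sup>2 * (r R * deriv r R / R\<^sup>2 - (r R)\<^sup>2 / R ^ 3)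
      + deriv r R / R * ((real M)\<^sup>2 * r R / R - deriv r R - R * deriv (deriv r) R)
      = - zform M r R / R ^ 3"
    using R by (simp add: zform_def field_simps power2_eq_square power3_eq_cube)
  ultimately show ?thesis
    by simp
qed

lemma deriv_zfun: "R \<in> {0<..<1} \<Longrightarrow> deriv (zfun M \<rho> r) R = - zform M r R / R ^ 3"
  by (rule DERIV_imp_deriv[OF zfun_DERIV])

lemma zform_DERIV:
  assumes "R \<in> {0<..<1}"
  shows "(zform M r has_real_derivative 2 * R * ((deriv r R)\<^sup>2 * (1 - (real M)\<^sup>2)
    + deriv (deriv r) R * (R * deriv r R - (real M)\<^sup>2 * r R))) (at R)"
  unfolding zform_def[abs_def] using assms
  by (auto intro!: derivative_eq_intros r_DERIV r'_DERIV simp: field_simps power2_eq_square)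

lemma zform_DERIV_neg_at_root:
  assumes "M \<ge> 2" "R \<in> {0<..<1}" "zform M r R = 0"
  shows "2 * R * ((deriv r R)\<^sup>2 * (1 - (real M)\<^sup>2)
    + deriv (deriv r) R * (R * deriv r R - (real M)\<^sup>2 * r R)) < 0"
proof (cases "r R = 0")
  case True
  then have "deriv r R = 0"
    using assms(2,3) by (simp add: zform_def)
  then show ?thesis
    using no_double_zero[OF assms(2) True] by blast
next
  case False
  have "(deriv r R)\<^sup>2 * (1 - (real M)\<^sup>2) + deriv (deriv r) R * (R * deriv r R - (real M)\<^sup>2 * r R) < 0"
  proof (rule derivative_sign_at_root[OF _ False rho''_nonneg])
    show "R > 0" "real M > 1"
      using assms(1,2) by auto
    show "(real M)\<^sup>2 * r R / R - deriv r R - R * deriv (deriv r) R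
      = real M * deriv (deriv \<rho>) (dfun M r R) * (real M * ((deriv r R)\<^sup>2 + r R * deriv (deriv r) R) / R
        - real M * r R * deriv r R / R\<^sup>2) * r R"
      using ode[OF assms(2)] deriv_dfun[OF assms(2)] by simp
    show "R\<^sup>2 * (deriv r R)\<^sup>2 - 2 * (real M)\<^sup>2 * R * r R * deriv r R + (real M)\<^sup>2 * (r R)\<^sup>2 = 0"
      using assms(3) by (simp add: zform_def)
  qed
  then show ?thesis
    using assms(2) by (simp add: mult_pos_neg)
qed

lemma zform_nonpos_persists:
  assumes "M \<ge> 2" "0 < x" "x \<le> y" "y < 1" "zform M r x \<le> 0"
  shows "zform M r y \<le> 0"
proof (rule nonpos_if_DERIV_neg_at_zeros[OF assms(3), where f' = "\<lambda>t. 2 * t * ((deriv r t)\<^sup>2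
    * (1 - (real M)\<^sup>2) + deriv (deriv r) t * (t * deriv r t - (real M)\<^sup>2 * r t))"])
  fix t assume "t \<in> {x..y}"
  then have t: "t \<in> {0<..<1}"
    using assms(2,4) by auto
  show "(zform M r has_real_derivative 2 * t * ((deriv r t)\<^sup>2 * (1 - (real M)\<^sup>2)
    + deriv (deriv r) t * (t * deriv r t - (real M)\<^sup>2 * r t))) (at t)"
    by (rule zform_DERIV[OF t])
  show "zform M r t = 0 \<Longrightarrow> 2 * t * ((deriv r t)\<^sup>2 * (1 - (real M)\<^sup>2)
    + deriv (deriv r) t * (t * deriv r t - (real M)\<^sup>2 * r t)) < 0"
    by (rule zform_DERIV_neg_at_root[OF assms(1) t])
qed (rule assms(5))

lemma zform_sign_near_zero:
  assumes "M \<ge> 2"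
  shows "(\<exists>\<epsilon>>0. \<epsilon> \<le> 1 \<and> (\<forall>R\<in>{0<..<\<epsilon>}. zform M r R > 0)) \<or> (\<forall>R\<in>{0<..<1}. zform M r R \<le> 0)"
proof -
  have "\<forall>R\<in>{0<..<1}. zform M r R \<le> 0"
    if not_pos: "\<not> (\<exists>\<epsilon>>0. \<epsilon> \<le> 1 \<and> (\<forall>R\<in>{0<..<\<epsilon>}. zform M r R > 0))"
  proof
    fix y :: real assume y: "y \<in> {0<..<1}"
    then obtain x where "x \<in> {0<..<y}" "zform M r x \<le> 0"
      using not_pos by (metis greaterThanLessThan_iff less_eq_real_def not_less)
    then show "zform M r y \<le> 0"
      using zform_nonpos_persists[OF assms] y by auto
  qed
  then show ?thesis
    by blast
qed

lemma deriv_ratio: "R \<in> {0<..<1} \<Longrightarrow> deriv (\<lambda>t. r t / t) R = (R * deriv r R - r R) / R\<^sup>2"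
  by (rule DERIV_imp_deriv)
    (auto intro!: derivative_eq_intros r_DERIV simp: field_simps power2_eq_square)

text \<open>Where \<open>R r' = r\<close>, the form \<open>zform\<close> reduces to \<open>(1 - M\<^sup>2) r\<^sup>2 \<le> 0\<close>.\<close>
lemma ratio_sign_where_zform_pos:
  assumes "M \<ge> 1" "\<epsilon> \<le> 1" and pos: "\<forall>R\<in>{0<..<\<epsilon>}. zform M r R > 0"
  shows "(\<forall>R\<in>{0<..<\<epsilon>}. deriv (\<lambda>t. r t / t) R > 0) \<or> (\<forall>R\<in>{0<..<\<epsilon>}. deriv (\<lambda>t. r t / t) R < 0)"
proof -
  have sub: "{0<..<\<epsilon>} \<subseteq> {0<..<1}"
    using assms(2) by auto
  have "(\<forall>R\<in>{0<..<\<epsilon>}. R * deriv r R - r R > 0) \<or> (\<forall>R\<in>{0<..<\<epsilon>}. R * deriv r R - r R < 0)"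
  proof (rule connected_nonzero_sign)
    show "continuous_on {0<..<\<epsilon>} (\<lambda>R. R * deriv r R - r R)"
      using sub DERIV_isCont[OF r_DERIV] DERIV_isCont[OF r'_DERIV]
      by (intro continuous_at_imp_continuous_on) (auto intro!: continuous_intros)
    fix R assume R: "R \<in> {0<..<\<epsilon>}"
    show "R * deriv r R - r R \<noteq> 0"
    proof
      assume "R * deriv r R - r R = 0"
      have "zform M r R = (R * deriv r R)\<^sup>2 - 2 * (real M)\<^sup>2 * r R * (R * deriv r R) + (real M)\<^sup>2 * (r R)\<^sup>2"
        by (simp add: zform_def power_mult_distrib algebra_simps)
      also have "\<dots> = (1 - (real M)\<^sup>2) * (r R)\<^sup>2"
        using \<open>R * deriv r R - r R = 0\<close> by (simp add: algebra_simps power2_eq_square)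
      also have "\<dots> \<le> 0"
        using assms(1) by (simp add: mult_nonpos_nonneg)
      finally show False
        using pos R by fastforce
    qed
  qed simp
  moreover have "deriv (\<lambda>t. r t / t) R = (R * deriv r R - r R) / R\<^sup>2" if "R \<in> {0<..<\<epsilon>}" for R
    using sub that by (intro deriv_ratio) auto
  ultimately show ?thesis
    by (auto simp: zero_less_divide_iff divide_less_0_iff)
qed

lemma ratio_between_roots_where_zform_nonpos:
  assumes "M \<ge> 1" "R \<in> {0<..<1}" "r R > 0" "zform M r R \<le> 0"
  shows "(real M)\<^sup>2 - real M * sqrt ((real M)\<^sup>2 - 1) \<le> R * deriv r R / r R"
    and "R * deriv r R / r R \<le> (real M)\<^sup>2 + real M * sqrt ((real M)\<^sup>2 - 1)"
proof -
  define w where "w = R * deriv r R / r R"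
  have "zform M r R = (r R)\<^sup>2 * (w\<^sup>2 - 2 * (real M)\<^sup>2 * w + (real M)\<^sup>2)"
    using assms(3) by (simp add: zform_def w_def field_simps power2_eq_square)
  then have "w\<^sup>2 - 2 * (real M)\<^sup>2 * w + (real M)\<^sup>2 \<le> 0"
    using assms(3,4) by (simp add: mult_le_0_iff)
  then show "(real M)\<^sup>2 - real M * sqrt ((real M)\<^sup>2 - 1) \<le> R * deriv r R / r R"
    and "R * deriv r R / r R \<le> (real M)\<^sup>2 + real M * sqrt ((real M)\<^sup>2 - 1)"
    using between_roots_if_quadratic_nonpos[of "real M" w] assms(1) unfolding w_def by auto
qed

end

theorem lemma2p5:
  fixes \<gamma> s0 \<kappa> :: real and \<rho> r :: "real \<Rightarrow> real" and M :: nat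
  assumes "rho_admissible \<gamma> s0 \<kappa> \<rho>"
    and "M \<ge> 2"
    and "strong_solution M \<rho> r"
  shows "\<exists>\<delta>>0. \<delta> \<le> 1 \<and>
    (mono_on {0<..<\<delta>} (zfun M \<rho> r) \<or>
     monotone_on {0<..<\<delta>} (\<le>) (\<ge>) (zfun M \<rho> r)) \<and>
    ((\<forall>R\<in>{0<..<\<delta>}. r R > 0) \<longrightarrow>
       (\<forall>R\<in>{0<..<\<delta>}. deriv (zfun M \<rho> r) R \<ge> 0 \<and>
           0 < (real M)\<^sup>2 - real M * sqrt ((real M)\<^sup>2 - 1) \<and>
           (real M)\<^sup>2 - real M * sqrt ((real M)\<^sup>2 - 1) \<le> R * deriv r R / r R \<and>
           R * deriv r R / r R \<le> (real M)\<^sup>2 + real M * sqrt ((real M)\<^sup>2 - 1))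
     \<or> (\<forall>R\<in>{0<..<\<delta>}. deriv (zfun M \<rho> r) R \<le> 0 \<and> deriv (\<lambda>t. r t / t) R > 0)
     \<or> (\<forall>R\<in>{0<..<\<delta>}. deriv (zfun M \<rho> r) R \<le> 0 \<and> deriv (\<lambda>t. r t / t) R < 0))"
proof -
  interpret bvp_solution M \<rho> r
    using assms(1,3) unfolding rho_admissible_def by unfold_locales auto
  have zfun_DERIV': "(zfun M \<rho> r has_real_derivative deriv (zfun M \<rho> r) R) (at R)"
    if "R \<in> {0<..<\<delta>}" "\<delta> \<le> 1" for R \<delta>
    using zfun_DERIV DERIV_imp_deriv that by fastforce
  consider (pos) \<epsilon> where "0 < \<epsilon>" "\<epsilon> \<le> 1" "\<forall>R\<in>{0<..<\<epsilon>}. zform M r R > 0"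
    | (nonpos) "\<forall>R\<in>{0<..<1}. zform M r R \<le> 0"
    using zform_sign_near_zero[OF assms(2)] by blast
  then show ?thesis
  proof cases
    case pos
    then have "\<forall>R\<in>{0<..<\<epsilon>}. deriv (zfun M \<rho> r) R \<le> 0"
      by (auto simp: deriv_zfun)
    moreover from this have "monotone_on {0<..<\<epsilon>} (\<le>) (\<ge>) (zfun M \<rho> r)"
      using zfun_DERIV' \<open>\<epsilon> \<le> 1\<close> by (intro antimono_on_if_DERIV_nonpos) auto
    ultimately show ?thesis
      using pos ratio_sign_where_zform_pos[of \<epsilon>] assms(2) by (intro exI[of _ \<epsilon>]) auto
  next
    case nonpos
    then have "\<forall>R\<in>{0<..<1}. deriv (zfun M \<rho> r) R \<ge> 0"
      by (auto simp: deriv_zfun divide_nonpos_pos)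
    moreover from this have "mono_on {0<..<1} (zfun M \<rho> r)"
      using zfun_DERIV' by (intro mono_on_if_DERIV_nonneg) auto
    ultimately show ?thesis
      using nonpos ratio_between_roots_where_zform_nonpos smaller_root_pos[of "real M"] assms(2)
      by (intro exI[of _ 1]) auto
  qed
qed

end
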